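(* Let $h>0$ satisfy $L_eh^2\le1/9$, where $L_e=L+2\epsilon\tilde L$. For $x,v\in\mathbb{R}^{Nd}$ and $\mathcal U_0\sim\mathrm{Unif}[0,1]$, let $Q_h(x,v)=x+hv-\frac{h^2}2\nabla U(x+h\mathcal U_0v)$ and $P_h(x,v)=v-h\nabla U(x+h\mathcal U_0v)$. Then $$\sum_{\ell=1}^N\mathbb{E}\Big[\big|\!\big|\!\big|(Q^\ell_h(x,v),P^\ell_h(x,v))-(q^\ell_h(x,v),p^\ell_h(x,v))\big|\!\big|\!\big|^2\Big]\le6(L_eh^2)^2\sum_{\ell=1}^N\Big(|\!|\!|(x^\ell,v^\ell)|\!|\!|^2+\frac13L_e^{-2}\epsilon^2\mathbf W_0^2\Big),$$ where $\mathbf W_0=|\nabla_1W(0,0)|$.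
   Context: Standing assumptions: $\epsilon\ge0$; $V:\mathbb{R}^d\to\mathbb{R}$, $W:\mathbb{R}^d\times\mathbb{R}^d\to\mathbb{R}$ are $C^1$, $\nabla_1W$ the gradient in the first argument, constants $L>0$, $\tilde L\ge0$ with: (a) $V(0)=0$, $V\ge0$; (b) $|\nabla V(x)-\nabla V(y)|\le L|x-y|$; (d) $W$ symmetric, $|\nabla_1W(x,y)-\nabla_1W(\tilde x,\tilde y)|\le\tilde L(|x-\tilde x|+|y-\tilde y|)$. Points of $\mathbb{R}^{Nd}$: $x=(x^1,\dots,x^N)$. $U(x)=\sum_i\big(V(x^i)+\frac\epsilon{2N}\sum_jW(x^i,x^j)\big)$, $\nabla_iU=\partial U/\partial x^i$. Exact flow $(q_t,p_t)(x,v)$: $\dot q^i_t=p^i_t$, $\dot p^i_t=-\nabla_iU(q_t)$, $(q_0,p_0)=(x,v)$. For $(a,b)\in\mathbb{R}^{2d}$, $|\!|\!|(a,b)|\!|\!|^2=|a|^2+L_e^{-1}|b|^2$. *)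

theory Defs
  imports "HOL-Analysis.Analysis"
begin

text \<open>Configurations in R^{Nd}: elements of 'a^'n, where 'a (euclidean space) plays R^d
  and the finite type 'n indexes the N = CARD('n) particles.\<close>

definition Upot :: "real \<Rightarrow> ('a \<Rightarrow> real) \<Rightarrow> ('a \<Rightarrow> 'a \<Rightarrow> real) \<Rightarrow> 'a ^ 'n::finite \<Rightarrow> real" where
  "Upot eps V W X = (\<Sum>i\<in>UNIV. V (X $ i) + eps / (2 * real CARD('n)) * (\<Sum>j\<in>UNIV. W (X $ i) (X $ j)))"

definition tnorm2 :: "real \<Rightarrow> 'a::real_normed_vector \<Rightarrow> 'a \<Rightarrow> real" where
  "tnorm2 Le a b = (norm a)\<^sup>2 + (norm b)\<^sup>2 / Le"

end

theory Submission
  imports Defs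
begin

text \<open>With y = x + h u v, the errors of the randomized midpoint step against the exact flow are the
  remainders of a second-order Taylor expansion with the force frozen at grad U(y), so they are
  driven by grad U(q s) - grad U(y) for s in [0, h]. The gradient of U is L_e-Lipschitz
  (L from V and eps Lt from each argument of W), and grad U(0) has norm sqrt N eps W_0 because V is
  minimal at 0. An a priori bound on max |q| over [0, h], which closes because L_e h^2 \<le> 1/9, then
  gives |q s - y| \<le> h |v| + O(h^2), and the resulting bound holds for every value of the uniform
  variable u, hence also for its expectation.\<close>

lemma continuous_on_case_prod_of_lipschitz:
  fixes f :: "'a::real_normed_vector \<Rightarrow> 'b::real_normed_vector \<Rightarrow> 'c::real_normed_vector"
  assumes "0 \<le> C" and f_lip: "\<And>y z y' z'. norm (f y z - f y' z') \<le> C * (norm (y - y') + norm (z - z'))"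
  shows "continuous_on UNIV (\<lambda>(y, z). f y z)"
proof (rule lipschitz_on_continuous_on)
  show "(2 * C)-lipschitz_on UNIV (\<lambda>(y, z). f y z)"
  proof (rule lipschitz_onI, clarsimp)
    fix y y' :: 'a and z z' :: 'b
    have "norm (y - y') + norm (z - z') \<le> 2 * dist (y, z) (y', z')"
      using norm_fst_le[of "y - y'" "z - z'"] norm_snd_le[of "z - z'" "y - y'"]
      by (simp add: dist_norm)
    with \<open>0 \<le> C\<close> have "C * (norm (y - y') + norm (z - z')) \<le> 2 * C * dist (y, z) (y', z')"
      by (metis mult.assoc mult.left_commute mult_left_mono)
    with f_lip show "dist (f y z) (f y' z') \<le> 2 * C * dist (y, z) (y', z')"
      by (metis dist_norm order_trans)
  qed (use \<open>0 \<le> C\<close> in simp)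
qed

lemma has_derivative_symmetric_kernel:
  fixes W :: "'a::real_inner \<Rightarrow> 'a \<Rightarrow> real"
  assumes W_deriv: "\<And>y z. ((\<lambda>u. W u z) has_derivative (\<lambda>w. gradW1 y z \<bullet> w)) (at y)"
    and W_sym: "\<And>y z. W y z = W z y"
    and gradW1_cont: "continuous_on UNIV (\<lambda>(y, z). gradW1 y z)"
  shows "((\<lambda>(y, z). W y z) has_derivative (\<lambda>(dy, dz). gradW1 a b \<bullet> dy + gradW1 b a \<bullet> dz)) (at (a, b))"
proof -
  have W_deriv2: "((\<lambda>z. W y z) has_derivative blinfun_apply (blinfun_inner_left (gradW1 z0 y)))
      (at z0 within UNIV)" for y z0
  proof -
    have "((\<lambda>u. W u y) has_derivative (\<lambda>w. gradW1 z0 y \<bullet> w)) (at z0)" by (rule W_deriv)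
    then show ?thesis by (simp add: W_sym[of y] inner_commute)
  qed
  have "continuous_on UNIV (\<lambda>p. blinfun_inner_left ((\<lambda>(y, z). gradW1 y z) (snd p, fst p)))"
    by (intro continuous_on_compose2[OF linear_continuous_on[OF bounded_linear_blinfun_inner_left]]
        continuous_on_compose2[OF gradW1_cont] continuous_intros) auto
  then have "continuous_on UNIV (\<lambda>(y, z). blinfun_inner_left (gradW1 z y))"
    by (simp add: case_prod_beta')
  then have "continuous (at (a, b) within UNIV \<times> UNIV) (\<lambda>(y, z). blinfun_inner_left (gradW1 z y))"
    by (simp add: continuous_on_eq_continuous_within)
  from has_derivative_partialsI[OF W_deriv W_deriv2 this]
  show ?thesis by (simp add: inner_commute)
qed

definition gradUpot :: "real \<Rightarrow> ('a::real_vector \<Rightarrow> 'a) \<Rightarrow> ('a \<Rightarrow> 'a \<Rightarrow> 'a) \<Rightarrow> 'a ^ 'n::finite \<Rightarrow> 'a ^ 'n"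
  where "gradUpot eps gradV gradW1 X =
    (\<chi> i. gradV (X $ i) + (eps / real CARD('n)) *\<^sub>R (\<Sum>j\<in>UNIV. gradW1 (X $ i) (X $ j)))"

lemma inner_gradUpot:
  fixes X Y :: "'a::real_inner ^ 'n::finite"
  defines "N \<equiv> real CARD('n)"
  shows "gradUpot eps gradV gradW1 X \<bullet> Y =
    (\<Sum>i\<in>UNIV. gradV (X $ i) \<bullet> Y $ i + eps / (2 * N) *
      (\<Sum>j\<in>UNIV. gradW1 (X $ i) (X $ j) \<bullet> Y $ i + gradW1 (X $ j) (X $ i) \<bullet> Y $ j))"
proof -
  have swap: "(\<Sum>i\<in>UNIV. \<Sum>j\<in>UNIV. gradW1 (X $ j) (X $ i) \<bullet> Y $ j) =
      (\<Sum>i\<in>UNIV. \<Sum>j\<in>UNIV. gradW1 (X $ i) (X $ j) \<bullet> Y $ i)"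
    by (rule sum.swap)
  have "gradUpot eps gradV gradW1 X \<bullet> Y = (\<Sum>i\<in>UNIV. gradV (X $ i) \<bullet> Y $ i) +
      eps / N * (\<Sum>i\<in>UNIV. \<Sum>j\<in>UNIV. gradW1 (X $ i) (X $ j) \<bullet> Y $ i)"
    by (simp add: gradUpot_def N_def inner_vec_def inner_add_left inner_sum_left sum.distrib
        sum_distrib_left)
  also have "\<dots> = (\<Sum>i\<in>UNIV. gradV (X $ i) \<bullet> Y $ i) + eps / (2 * N) *
      ((\<Sum>i\<in>UNIV. \<Sum>j\<in>UNIV. gradW1 (X $ i) (X $ j) \<bullet> Y $ i) +
       (\<Sum>i\<in>UNIV. \<Sum>j\<in>UNIV. gradW1 (X $ j) (X $ i) \<bullet> Y $ j))"
    unfolding swap by simp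
  also have "\<dots> = (\<Sum>i\<in>UNIV. gradV (X $ i) \<bullet> Y $ i + eps / (2 * N) *
      (\<Sum>j\<in>UNIV. gradW1 (X $ i) (X $ j) \<bullet> Y $ i + gradW1 (X $ j) (X $ i) \<bullet> Y $ j))"
    by (simp add: sum.distrib sum_distrib_left distrib_left)
  finally show ?thesis .
qed

lemma has_derivative_Upot:
  fixes V :: "'a::real_inner \<Rightarrow> real" and W :: "'a \<Rightarrow> 'a \<Rightarrow> real"
  assumes V_deriv: "\<And>y. (V has_derivative (\<lambda>w. gradV y \<bullet> w)) (at y)"
    and W_deriv: "\<And>y z. ((\<lambda>u. W u z) has_derivative (\<lambda>w. gradW1 y z \<bullet> w)) (at y)"
    and W_sym: "\<And>y z. W y z = W z y"
    and gradW1_cont: "continuous_on UNIV (\<lambda>(y, z). gradW1 y z)"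
  shows "(Upot eps V W has_derivative (\<lambda>Y. gradUpot eps gradV gradW1 X \<bullet> Y)) (at (X :: 'a ^ 'n::finite))"
proof -
  have dV: "((\<lambda>X. V (X $ i)) has_derivative (\<lambda>Y. gradV (X $ i) \<bullet> Y $ i)) (at X)" for i
    using diff_chain_at[OF bounded_linear_imp_has_derivative[OF bounded_linear_vec_nth] V_deriv]
    by (simp add: o_def)
  have dW: "((\<lambda>X. W (X $ i) (X $ j)) has_derivative
      (\<lambda>Y. gradW1 (X $ i) (X $ j) \<bullet> Y $ i + gradW1 (X $ j) (X $ i) \<bullet> Y $ j)) (at X)" for i j
  proof -
    have "((\<lambda>X. (X $ i, X $ j)) has_derivative (\<lambda>Y. (Y $ i, Y $ j))) (at X)"
      by (intro has_derivative_Pair bounded_linear_imp_has_derivative bounded_linear_vec_nth)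
    from diff_chain_at[OF this has_derivative_symmetric_kernel[OF W_deriv W_sym gradW1_cont]]
    show ?thesis by (simp add: o_def)
  qed
  show ?thesis
    unfolding Upot_def[abs_def] inner_gradUpot
    by (intro has_derivative_sum has_derivative_add has_derivative_mult_right dV dW)
qed

lemma gradient_unique:
  fixes f :: "'a::real_inner \<Rightarrow> real"
  assumes "(f has_derivative (\<lambda>y. g \<bullet> y)) (at x)" and "(f has_derivative (\<lambda>y. g' \<bullet> y)) (at x)"
  shows "g = g'"
proof -
  have "(\<lambda>y. g \<bullet> y) = (\<lambda>y. g' \<bullet> y)"
    using has_derivative_unique[OF assms] .
  then have "(g - g') \<bullet> (g - g') = 0"
    by (metis inner_diff_left inner_diff_right diff_self)
  then show ?thesis by simp
qed

lemma sum_norm_le_sqrt_card_norm: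
  fixes X :: "'a::real_normed_vector ^ 'n::finite"
  shows "(\<Sum>j\<in>UNIV. norm (X $ j)) \<le> sqrt (real CARD('n)) * norm X"
proof -
  have "(\<Sum>j\<in>UNIV. norm (X $ j)) \<le> L2_set (\<lambda>j. norm (X $ j)) UNIV * L2_set (\<lambda>_. 1) (UNIV :: 'n set)"
    using L2_set_mult_ineq[of "\<lambda>j. norm (X $ j)" "\<lambda>_. 1" UNIV] by (simp only: abs_norm_cancel abs_one mult_1_right)
  also have "\<dots> = sqrt (real CARD('n)) * norm X"
    by (simp add: norm_vec_def L2_set_constant)
  finally show ?thesis .
qed

lemma lipschitz_gradUpot:
  fixes gradV :: "'a::real_normed_vector \<Rightarrow> 'a" and X Y :: "'a ^ 'n::finite"
  assumes eps: "0 \<le> eps" and L: "0 \<le> L" and Lt: "0 \<le> Lt"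
    and V_lip: "\<And>y z. norm (gradV y - gradV z) \<le> L * norm (y - z)"
    and W_lip: "\<And>y z y' z'. norm (gradW1 y z - gradW1 y' z') \<le> Lt * (norm (y - y') + norm (z - z'))"
  shows "norm (gradUpot eps gradV gradW1 X - gradUpot eps gradV gradW1 Y) \<le> (L + 2 * eps * Lt) * norm (X - Y)"
proof -
  define N where "N = real CARD('n)"
  define d where "d i = norm (X $ i - Y $ i)" for i
  define S where "S = (\<Sum>j\<in>UNIV. d j)"
  have N: "0 < N" unfolding N_def by simp
  have norm_d: "L2_set d UNIV = norm (X - Y)"
    by (simp add: norm_vec_def d_def[abs_def])
  have S0: "0 \<le> S"
    unfolding S_def d_def by (simp add: sum_nonneg)
  have S: "S \<le> sqrt N * norm (X - Y)"
    using sum_norm_le_sqrt_card_norm[of "X - Y"] by (simp add: S_def d_def N_def)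
  have component: "norm (gradUpot eps gradV gradW1 X $ i - gradUpot eps gradV gradW1 Y $ i)
      \<le> (L + eps * Lt) * d i + eps * Lt / N * S" for i
  proof -
    have "gradUpot eps gradV gradW1 X $ i - gradUpot eps gradV gradW1 Y $ i =
        (gradV (X $ i) - gradV (Y $ i)) +
        (eps / N) *\<^sub>R (\<Sum>j\<in>UNIV. gradW1 (X $ i) (X $ j) - gradW1 (Y $ i) (Y $ j))"
      by (simp add: gradUpot_def N_def sum_subtractf scaleR_diff_right algebra_simps)
    also have "norm \<dots> \<le> norm (gradV (X $ i) - gradV (Y $ i)) +
        (eps / N) * norm (\<Sum>j\<in>UNIV. gradW1 (X $ i) (X $ j) - gradW1 (Y $ i) (Y $ j))"
      using eps N by (intro order_trans[OF norm_triangle_ineq]) simp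
    also have "\<dots> \<le> L * d i + (eps / N) * (\<Sum>j\<in>UNIV. Lt * (d i + d j))"
      unfolding d_def using eps N
      by (intro add_mono mult_left_mono V_lip order_trans[OF norm_sum] sum_mono W_lip) auto
    also have "\<dots> = (L + eps * Lt) * d i + eps * Lt / N * S"
      using N by (simp add: S_def N_def sum.distrib sum_distrib_left sum_divide_distrib algebra_simps)
    finally show ?thesis .
  qed
  have "norm (gradUpot eps gradV gradW1 X - gradUpot eps gradV gradW1 Y)
      \<le> L2_set (\<lambda>i. (L + eps * Lt) * d i + eps * Lt / N * S) UNIV"
    unfolding norm_vec_def vector_minus_component by (intro L2_set_mono component norm_ge_zero)
  also have "\<dots> \<le> L2_set (\<lambda>i. (L + eps * Lt) * d i) UNIV + L2_set (\<lambda>i::'n. eps * Lt / N * S) UNIV"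
    by (rule L2_set_triangle_ineq)
  also have "\<dots> = (L + eps * Lt) * norm (X - Y) + sqrt N * (eps * Lt / N * S)"
    using eps Lt L S0 by (simp add: L2_set_right_distrib[symmetric] norm_d L2_set_constant N_def)
  also have "\<dots> \<le> (L + eps * Lt) * norm (X - Y) + sqrt N * (eps * Lt / N * (sqrt N * norm (X - Y)))"
    using eps Lt N S by (intro add_left_mono mult_left_mono) auto
  also have "\<dots> = (L + 2 * eps * Lt) * norm (X - Y)"
    using N by (simp add: field_simps flip: real_sqrt_mult)
  finally show ?thesis .
qed

lemma gradient_eq_0_at_minimum:
  fixes V :: "'a::real_inner \<Rightarrow> real"
  assumes "(V has_derivative (\<lambda>w. g \<bullet> w)) (at a)" and "\<And>y. V a \<le> V y"
  shows "g = 0"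
proof -
  have "(\<lambda>w. g \<bullet> w) = (\<lambda>w. 0)"
    by (rule differential_zero_maxmin[of a UNIV]) (use assms in auto)
  then have "g \<bullet> g = 0" by metis
  then show ?thesis by simp
qed

lemma norm_gradUpot_0:
  fixes gradW1 :: "'a::real_normed_vector \<Rightarrow> 'a \<Rightarrow> 'a"
  assumes "gradV 0 = 0" and "0 \<le> eps"
  shows "norm (gradUpot eps gradV gradW1 (0 :: 'a ^ 'n::finite)) =
    sqrt (real CARD('n)) * eps * norm (gradW1 0 0)"
proof -
  have "gradUpot eps gradV gradW1 (0 :: 'a ^ 'n) = (\<chi> i. eps *\<^sub>R gradW1 0 0)"
    by (simp add: gradUpot_def assms(1) vec_eq_iff sum_constant_scaleR)
  then show ?thesis by (simp add: norm_vec_def L2_set_constant assms(2))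
qed

lemma norm_diff_le_of_vector_derivative_bound:
  fixes f f' :: "real \<Rightarrow> 'v::real_normed_vector"
  assumes r: "0 \<le> r" and f': "\<And>t. t \<in> {0..r} \<Longrightarrow> (f has_vector_derivative f' t) (at t)"
    and bound: "\<And>t. t \<in> {0..r} \<Longrightarrow> norm (f' t) \<le> B"
  shows "norm (f r - f 0) \<le> B * r"
proof (cases "r = 0")
  case False
  have "continuous_on {0..r} f"
    using f' by (intro continuous_at_imp_continuous_on ballI has_vector_derivative_continuous)
  then have "norm (f r - f 0) \<le> B * r - B * 0"
    by (intro differentiable_bound_general[where f' = f' and \<phi>' = "\<lambda>_. B"])
      (use r False f' bound in \<open>auto intro!: derivative_eq_intros continuous_intros\<close>)
  then show ?thesis by simp
qed simp

lemma second_order_remainder_bound: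
  fixes q p F :: "real \<Rightarrow> 'v::real_normed_vector"
  assumes s: "0 \<le> s"
    and q': "\<And>t. t \<in> {0..s} \<Longrightarrow> (q has_vector_derivative p t) (at t)"
    and p': "\<And>t. t \<in> {0..s} \<Longrightarrow> (p has_vector_derivative F t) (at t)"
    and F: "\<And>t. t \<in> {0..s} \<Longrightarrow> norm (F t - c) \<le> D"
  shows "norm (p s - p 0 - s *\<^sub>R c) \<le> D * s"
    and "norm (q s - q 0 - s *\<^sub>R p 0 - (s\<^sup>2 / 2) *\<^sub>R c) \<le> D * s\<^sup>2"
proof -
  have D: "0 \<le> D"
    using F[of 0] s by (simp add: order_trans[OF norm_ge_zero])
  have p_remainder: "norm (p t - p 0 - t *\<^sub>R c) \<le> D * t" if t: "t \<in> {0..s}" for t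
  proof -
    have "((\<lambda>t. p t - t *\<^sub>R c) has_vector_derivative F r - c) (at r)" if "r \<in> {0..t}" for r
      using p'[of r] that t by (auto intro!: derivative_eq_intros)
    then have "norm ((p t - t *\<^sub>R c) - (p 0 - 0 *\<^sub>R c)) \<le> D * t"
      using t F by (intro norm_diff_le_of_vector_derivative_bound) auto
    then show ?thesis by (simp add: algebra_simps)
  qed
  then show "norm (p s - p 0 - s *\<^sub>R c) \<le> D * s"
    using s by simp
  have "((\<lambda>t. q t - t *\<^sub>R p 0 - (t\<^sup>2 / 2) *\<^sub>R c) has_vector_derivative p t - p 0 - t *\<^sub>R c) (at t)"
    if "t \<in> {0..s}" for t
    using q'[OF that] by (auto intro!: derivative_eq_intros)
  moreover have "norm (p t - p 0 - t *\<^sub>R c) \<le> D * s" if "t \<in> {0..s}" for t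
    using p_remainder[OF that] mult_left_mono[of t s D] D that by auto
  ultimately have "norm ((q s - s *\<^sub>R p 0 - (s\<^sup>2 / 2) *\<^sub>R c) - (q 0 - 0 *\<^sub>R p 0 - (0\<^sup>2 / 2) *\<^sub>R c))
      \<le> D * s * s"
    using s by (intro norm_diff_le_of_vector_derivative_bound) auto
  then show "norm (q s - q 0 - s *\<^sub>R p 0 - (s\<^sup>2 / 2) *\<^sub>R c) \<le> D * s\<^sup>2"
    by (simp add: power2_eq_square algebra_simps)
qed

lemma power2_sum3_le:
  fixes a b c :: real
  shows "(a + b + c)\<^sup>2 \<le> 3 * (a\<^sup>2 + b\<^sup>2 + c\<^sup>2)"
proof -
  have "0 \<le> (a - b)\<^sup>2 + (b - c)\<^sup>2 + (a - c)\<^sup>2" by simp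
  then show ?thesis by (simp add: power2_eq_square algebra_simps)
qed

lemma local_error_arith:
  fixes Le h nx nv b K :: real
  assumes Le: "0 < Le" and h: "0 \<le> h" and step: "Le * h\<^sup>2 \<le> 1 / 9"
    and nv: "0 \<le> nv" and b: "0 \<le> b" and K0: "0 \<le> K"
    and K: "K \<le> nx + h * nv + h\<^sup>2 * (Le * K + b)"
  defines "D \<equiv> Le * (h\<^sup>2 * (Le * K + b) + h * nv)"
  shows "(D * h\<^sup>2)\<^sup>2 + (D * h)\<^sup>2 / Le \<le> 6 * (Le * h\<^sup>2)\<^sup>2 * (nx\<^sup>2 + nv\<^sup>2 / Le + b\<^sup>2 / (3 * Le\<^sup>2))"
proof -
  define \<kappa> where "\<kappa> = Le * h\<^sup>2"
  define w where "w = nv + h * (Le * K + b)"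
  define A B C where "A = Le * nx\<^sup>2" and "B = nv\<^sup>2" and "C = b\<^sup>2 / Le"
  have \<kappa>: "0 \<le> \<kappa>" "\<kappa> \<le> 1 / 9"
    using step Le by (simp_all add: \<kappa>_def)
  have ABC: "0 \<le> A" "0 \<le> B" "0 \<le> C"
    using Le by (simp_all add: A_def B_def C_def)
  have w0: "0 \<le> w"
    unfolding w_def using h Le K0 b nv by simp
  \<comment> \<open>Inserting the implicit bound on K, the terms \<kappa> * nv and \<kappa> * h * b cancel exactly.\<close>
  have "8 / 9 * w \<le> (1 - \<kappa>) * w"
    using \<kappa> w0 by (intro mult_right_mono) auto
  also have "(1 - \<kappa>) * w \<le> h * Le * nx + nv + h * b"
    using mult_left_mono[OF K, of "h * Le"] h Le
    by (simp add: \<kappa>_def w_def power2_eq_square algebra_simps)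
  finally have "w \<le> 9 / 8 * (h * Le * nx + nv + h * b)"
    by (simp add: algebra_simps)
  then have "w\<^sup>2 \<le> (9 / 8 * (h * Le * nx + nv + h * b))\<^sup>2"
    using w0 by (rule power_mono)
  also have "\<dots> = 81 / 64 * (h * Le * nx + nv + h * b)\<^sup>2"
    unfolding power_mult_distrib by (simp add: power_divide)
  also have "(h * Le * nx + nv + h * b)\<^sup>2 \<le> 3 * ((h * Le * nx)\<^sup>2 + nv\<^sup>2 + (h * b)\<^sup>2)"
    by (rule power2_sum3_le)
  also have "(h * Le * nx)\<^sup>2 + nv\<^sup>2 + (h * b)\<^sup>2 = \<kappa> * A + B + \<kappa> * C"
    using Le by (simp add: \<kappa>_def A_def B_def C_def power2_eq_square field_simps)
  finally have w2: "w\<^sup>2 \<le> 243 / 64 * (\<kappa> * A + B + \<kappa> * C)"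
    by simp
  have "(1 + \<kappa>) * w\<^sup>2 \<le> 10 / 9 * (243 / 64 * (A / 9 + B + C / 9))"
  proof (rule mult_mono)
    show "w\<^sup>2 \<le> 243 / 64 * (A / 9 + B + C / 9)"
      using w2 \<kappa> ABC mult_right_mono[OF \<kappa>(2), of A] mult_right_mono[OF \<kappa>(2), of C] by simp
  qed (use \<kappa> ABC in auto)
  also have "\<dots> \<le> 6 * (A + B + C / 3)"
    using ABC by simp
  finally have main: "(1 + \<kappa>) * w\<^sup>2 \<le> 6 * (A + B + C / 3)" .
  have "(D * h\<^sup>2)\<^sup>2 + (D * h)\<^sup>2 / Le = \<kappa>\<^sup>2 / Le * ((1 + \<kappa>) * w\<^sup>2)"
    using Le by (simp add: D_def \<kappa>_def w_def power2_eq_square field_simps)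
  also have "\<dots> \<le> \<kappa>\<^sup>2 / Le * (6 * (A + B + C / 3))"
    using main Le by (intro mult_left_mono) auto
  also have "\<dots> = 6 * (Le * h\<^sup>2)\<^sup>2 * (nx\<^sup>2 + nv\<^sup>2 / Le + b\<^sup>2 / (3 * Le\<^sup>2))"
    using Le by (simp add: \<kappa>_def A_def B_def C_def power2_eq_square field_simps)
  finally show ?thesis .
qed

lemma newton_flow_a_priori_bound:
  fixes G :: "'v::real_normed_vector \<Rightarrow> 'v" and q p :: "real \<Rightarrow> 'v"
  assumes G_growth: "\<And>X. norm (G X) \<le> Le * norm X + b" and Le: "0 \<le> Le"
    and q': "\<And>t. (q has_vector_derivative p t) (at t)"
    and p': "\<And>t. (p has_vector_derivative - G (q t)) (at t)"
    and h: "0 \<le> h"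
  obtains K where "0 \<le> K" and "K \<le> norm (q 0) + h * norm (p 0) + h\<^sup>2 * (Le * K + b)"
    and "\<And>s. s \<in> {0..h} \<Longrightarrow> norm (q s - q 0 - s *\<^sub>R p 0) \<le> (Le * K + b) * h\<^sup>2"
proof -
  have "continuous_on {0..h} (\<lambda>s. norm (q s))"
    using q' by (intro continuous_on_norm continuous_at_imp_continuous_on ballI
        has_vector_derivative_continuous)
  then have "\<exists>r\<in>{0..h}. \<forall>s\<in>{0..h}. norm (q s) \<le> norm (q r)"
    using h by (intro continuous_attains_sup) auto
  then obtain r where r: "r \<in> {0..h}" and r_max: "\<And>s. s \<in> {0..h} \<Longrightarrow> norm (q s) \<le> norm (q r)"
    by blast
  define K where "K = norm (q r)"
  have b: "0 \<le> b"
    using G_growth[of 0] by (simp add: order_trans[OF norm_ge_zero])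
  have drift: "norm (q s - q 0 - s *\<^sub>R p 0) \<le> (Le * K + b) * h\<^sup>2" if s: "s \<in> {0..h}" for s
  proof -
    have "norm (- G (q t) - 0) \<le> Le * K + b" if "t \<in> {0..s}" for t
      using G_growth[of "q t"] mult_left_mono[OF r_max Le, of t] that s
      unfolding K_def by auto
    then have "norm (q s - q 0 - s *\<^sub>R p 0) \<le> (Le * K + b) * s\<^sup>2"
      using second_order_remainder_bound(2)[of s q p "\<lambda>t. - G (q t)" 0] q' p' s by auto
    also have "\<dots> \<le> (Le * K + b) * h\<^sup>2"
      using s Le b by (intro mult_left_mono power_mono) (auto simp: K_def)
    finally show ?thesis .
  qed
  show ?thesis
  proof (rule that)
    show "0 \<le> K"
      by (simp add: K_def)
    have "K \<le> norm (q 0 + r *\<^sub>R p 0) + norm (q r - q 0 - r *\<^sub>R p 0)"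
      unfolding K_def using norm_triangle_ineq[of "q 0 + r *\<^sub>R p 0" "q r - q 0 - r *\<^sub>R p 0"] by simp
    also have "\<dots> \<le> norm (q 0) + h * norm (p 0) + h\<^sup>2 * (Le * K + b)"
      using norm_triangle_ineq[of "q 0" "r *\<^sub>R p 0"] mult_right_mono[of r h "norm (p 0)"] drift[OF r] r
      by (simp add: mult.commute)
    finally show "K \<le> norm (q 0) + h * norm (p 0) + h\<^sup>2 * (Le * K + b)" .
  qed (use drift in auto)
qed

lemma newton_flow_local_error:
  fixes G :: "'v::real_normed_vector \<Rightarrow> 'v" and q p :: "real \<Rightarrow> 'v"
  assumes G_lip: "\<And>X Y. norm (G X - G Y) \<le> Le * norm (X - Y)" and G_0: "norm (G 0) \<le> b"
    and q': "\<And>t. (q has_vector_derivative p t) (at t)"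
    and p': "\<And>t. (p has_vector_derivative - G (q t)) (at t)"
    and Le: "0 < Le" and h: "0 \<le> h" and step: "Le * h\<^sup>2 \<le> 1 / 9" and u: "u \<in> {0..1}"
  defines "y \<equiv> q 0 + (h * u) *\<^sub>R p 0"
  shows "(norm (q 0 + h *\<^sub>R p 0 - (h\<^sup>2 / 2) *\<^sub>R G y - q h))\<^sup>2 + (norm (p 0 - h *\<^sub>R G y - p h))\<^sup>2 / Le
    \<le> 6 * (Le * h\<^sup>2)\<^sup>2 * ((norm (q 0))\<^sup>2 + (norm (p 0))\<^sup>2 / Le + b\<^sup>2 / (3 * Le\<^sup>2))"
proof -
  have "norm (G X) \<le> Le * norm X + b" for X
    using G_lip[of X 0] G_0 norm_triangle_ineq[of "G X - G 0" "G 0"] by simp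
  then obtain K where K0: "0 \<le> K" and K: "K \<le> norm (q 0) + h * norm (p 0) + h\<^sup>2 * (Le * K + b)"
    and drift: "\<And>s. s \<in> {0..h} \<Longrightarrow> norm (q s - q 0 - s *\<^sub>R p 0) \<le> (Le * K + b) * h\<^sup>2"
    using newton_flow_a_priori_bound[OF _ _ q' p' h] Le by (metis less_imp_le)
  define D where "D = Le * (h\<^sup>2 * (Le * K + b) + h * norm (p 0))"
  have force: "norm (- G (q s) - - G y) \<le> D" if s: "s \<in> {0..h}" for s
  proof -
    have "0 \<le> h * u" "h * u \<le> h"
      using h u by (simp_all add: mult_left_le)
    then have "\<bar>s - h * u\<bar> \<le> h"
      using s unfolding abs_le_iff atLeastAtMost_iff by linarith
    have "norm (q s - y) = norm ((q s - q 0 - s *\<^sub>R p 0) + (s - h * u) *\<^sub>R p 0)"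
      by (simp add: y_def algebra_simps)
    also have "\<dots> \<le> norm (q s - q 0 - s *\<^sub>R p 0) + \<bar>s - h * u\<bar> * norm (p 0)"
      by (rule order_trans[OF norm_triangle_ineq]) simp
    also have "\<dots> \<le> (Le * K + b) * h\<^sup>2 + h * norm (p 0)"
      using drift[OF s] \<open>\<bar>s - h * u\<bar> \<le> h\<close> by (intro add_mono mult_right_mono) auto
    finally have "Le * norm (q s - y) \<le> D"
      unfolding D_def using Le by (intro mult_left_mono) (simp_all add: algebra_simps)
    with G_lip[of "q s" y] show ?thesis
      by (simp add: norm_minus_commute)
  qed
  have p_err: "norm (p h - p 0 - h *\<^sub>R - G y) \<le> D * h"
    and q_err: "norm (q h - q 0 - h *\<^sub>R p 0 - (h\<^sup>2 / 2) *\<^sub>R - G y) \<le> D * h\<^sup>2"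
    using second_order_remainder_bound[of h q p "\<lambda>t. - G (q t)" "- G y" D] h q' p' force by auto
  have "(norm (q 0 + h *\<^sub>R p 0 - (h\<^sup>2 / 2) *\<^sub>R G y - q h))\<^sup>2 + (norm (p 0 - h *\<^sub>R G y - p h))\<^sup>2 / Le
      \<le> (D * h\<^sup>2)\<^sup>2 + (D * h)\<^sup>2 / Le"
  proof (intro add_mono divide_right_mono power_mono)
    show "norm (q 0 + h *\<^sub>R p 0 - (h\<^sup>2 / 2) *\<^sub>R G y - q h) \<le> D * h\<^sup>2"
      using q_err by (simp add: norm_minus_commute algebra_simps)
    show "norm (p 0 - h *\<^sub>R G y - p h) \<le> D * h"
      using p_err by (simp add: norm_minus_commute algebra_simps)
  qed (use Le in auto)
  also have "\<dots> \<le> 6 * (Le * h\<^sup>2)\<^sup>2 * ((norm (q 0))\<^sup>2 + (norm (p 0))\<^sup>2 / Le + b\<^sup>2 / (3 * Le\<^sup>2))"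
    unfolding D_def using Le h step K0 K G_0
    by (intro local_error_arith) (auto intro: order_trans[OF norm_ge_zero])
  finally show ?thesis .
qed

lemma sum_tnorm2_vec:
  fixes A B :: "'a::real_normed_vector ^ 'n::finite"
  shows "(\<Sum>l\<in>UNIV. tnorm2 Le (A $ l) (B $ l)) = (norm A)\<^sup>2 + (norm B)\<^sup>2 / Le"
  by (simp add: tnorm2_def norm_vec_def L2_set_def sum_nonneg sum.distrib sum_divide_distrib)

lemma sum_integral_le_const:
  fixes f :: "'i \<Rightarrow> real \<Rightarrow> real"
  assumes "finite I" and "a \<le> b" and cont: "\<And>i. i \<in> I \<Longrightarrow> continuous_on {a..b} (f i)"
    and bound: "\<And>u. u \<in> {a..b} \<Longrightarrow> (\<Sum>i\<in>I. f i u) \<le> R"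
  shows "(\<Sum>i\<in>I. integral {a..b} (f i)) \<le> R * (b - a)"
proof -
  have "(\<Sum>i\<in>I. integral {a..b} (f i)) = integral {a..b} (\<lambda>u. \<Sum>i\<in>I. f i u)"
    using assms(1) cont by (simp add: integral_sum integrable_continuous_real)
  also have "\<dots> \<le> integral {a..b} (\<lambda>_. R)"
    using assms(1) cont bound by (intro integral_le integrable_sum integrable_continuous_real) auto
  also have "\<dots> = R * (b - a)"
    using \<open>a \<le> b\<close> by simp
  finally show ?thesis .
qed

lemma randomized_midpoint_mean_error:
  fixes G :: "'a::real_normed_vector ^ 'n::finite \<Rightarrow> 'a ^ 'n" and q p :: "real \<Rightarrow> 'a ^ 'n"
  assumes G_lip: "\<And>X Y. norm (G X - G Y) \<le> Le * norm (X - Y)" and G_0: "norm (G 0) \<le> b"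
    and q': "\<And>t. (q has_vector_derivative p t) (at t)"
    and p': "\<And>t. (p has_vector_derivative - G (q t)) (at t)"
    and Le: "0 < Le" and h: "0 \<le> h" and step: "Le * h\<^sup>2 \<le> 1 / 9"
  shows "(\<Sum>l\<in>UNIV. integral {0..1} (\<lambda>u. tnorm2 Le
      ((q 0 + h *\<^sub>R p 0 - (h\<^sup>2 / 2) *\<^sub>R G (q 0 + (h * u) *\<^sub>R p 0)) $ l - q h $ l)
      ((p 0 - h *\<^sub>R G (q 0 + (h * u) *\<^sub>R p 0)) $ l - p h $ l)))
    \<le> 6 * (Le * h\<^sup>2)\<^sup>2 * ((norm (q 0))\<^sup>2 + (norm (p 0))\<^sup>2 / Le + b\<^sup>2 / (3 * Le\<^sup>2))"
    (is "(\<Sum>l\<in>UNIV. integral {0..1} (?F l)) \<le> ?R")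
proof -
  have "continuous_on UNIV G"
    using G_lip Le by (intro lipschitz_on_continuous_on[of Le] lipschitz_onI) (auto simp: dist_norm)
  then have "continuous_on {0..1} (\<lambda>u. G (q 0 + (h * u) *\<^sub>R p 0))"
    by (rule continuous_on_compose2) (auto intro!: continuous_intros)
  then have "continuous_on {0..1} (?F l)" for l
    unfolding tnorm2_def using Le by (intro continuous_intros) auto
  moreover have "(\<Sum>l\<in>UNIV. ?F l u) \<le> ?R" if "u \<in> {0..1}" for u
    using newton_flow_local_error[OF G_lip G_0 q' p' Le h step that]
    by (simp add: sum_tnorm2_vec flip: vector_minus_component)
  ultimately have "(\<Sum>l\<in>UNIV. integral {0..1} (?F l)) \<le> ?R * (1 - 0)"
    by (intro sum_integral_le_const) auto
  then show ?thesis
    by simp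
qed

theorem mainTheorem15:
  fixes eps L Lt h :: real
    and V :: "'a::euclidean_space \<Rightarrow> real" and gradV :: "'a \<Rightarrow> 'a"
    and W :: "'a \<Rightarrow> 'a \<Rightarrow> real" and gradW1 :: "'a \<Rightarrow> 'a \<Rightarrow> 'a"
    and gradU :: "'a ^ 'n::finite \<Rightarrow> 'a ^ 'n"
    and x v :: "'a ^ 'n"
    and q p :: "real \<Rightarrow> 'a ^ 'n"
  assumes eps: "eps \<ge> 0" and L: "L > 0" and Lt: "Lt \<ge> 0"
    and V_deriv: "\<And>y. (V has_derivative (\<lambda>w. gradV y \<bullet> w)) (at y)"
    and V0: "V 0 = 0" and Vnonneg: "\<And>y. V y \<ge> 0"
    and V_lip: "\<And>y z. norm (gradV y - gradV z) \<le> L * norm (y - z)"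
    and W_deriv: "\<And>y z. ((\<lambda>u. W u z) has_derivative (\<lambda>w. gradW1 y z \<bullet> w)) (at y)"
    and W_cont_diff: "continuous_on UNIV (\<lambda>(y, z). W y z)"
    and W_sym: "\<And>y z. W y z = W z y"
    and W_lip: "\<And>y z y' z'. norm (gradW1 y z - gradW1 y' z') \<le> Lt * (norm (y - y') + norm (z - z'))"
    and U_grad: "\<And>X. (Upot eps V W has_derivative (\<lambda>Y. gradU X \<bullet> Y)) (at X)"
    and q_ode: "\<And>t. (q has_vector_derivative p t) (at t)"
    and p_ode: "\<And>t. (p has_vector_derivative (- gradU (q t))) (at t)"
    and q0: "q 0 = x" and p0: "p 0 = v"
    and h: "h > 0"
    and step: "(L + 2 * eps * Lt) * h\<^sup>2 \<le> 1 / 9"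
  shows
    "(\<Sum>l\<in>UNIV. integral {0..1} (\<lambda>u.
        tnorm2 (L + 2 * eps * Lt)
          ((x + h *\<^sub>R v - (h\<^sup>2 / 2) *\<^sub>R gradU (x + (h * u) *\<^sub>R v)) $ l - q h $ l)
          ((v - h *\<^sub>R gradU (x + (h * u) *\<^sub>R v)) $ l - p h $ l)))
     \<le> 6 * ((L + 2 * eps * Lt) * h\<^sup>2)\<^sup>2 *
        (\<Sum>l\<in>UNIV. tnorm2 (L + 2 * eps * Lt) (x $ l) (v $ l)
           + 1 / 3 * (L + 2 * eps * Lt) powi (-2) * eps\<^sup>2 * (norm (gradW1 0 0))\<^sup>2)"
proof -
  define Le where "Le = L + 2 * eps * Lt"
  define b where "b = sqrt (real CARD('n)) * eps * norm (gradW1 0 0)"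
  have Le: "0 < Le"
    unfolding Le_def using L eps Lt by (simp add: add_pos_nonneg)
  have "continuous_on UNIV (\<lambda>(y, z). gradW1 y z)"
    using Lt W_lip by (rule continuous_on_case_prod_of_lipschitz)
  then have gradU: "gradU = gradUpot eps gradV gradW1"
    using gradient_unique[OF U_grad has_derivative_Upot[OF V_deriv W_deriv W_sym]] by auto
  have gradU_lip: "norm (gradU X - gradU Y) \<le> Le * norm (X - Y)" for X Y
    unfolding gradU Le_def using eps L Lt V_lip W_lip by (intro lipschitz_gradUpot) auto
  have "gradV 0 = 0"
    using V_deriv V0 Vnonneg by (intro gradient_eq_0_at_minimum[where V = V and a = 0]) auto
  then have gradU_0: "norm (gradU 0) \<le> b"
    unfolding gradU b_def using eps by (simp add: norm_gradUpot_0)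
  have "b\<^sup>2 = real CARD('n) * (eps\<^sup>2 * (norm (gradW1 0 0))\<^sup>2)"
    by (simp add: b_def power_mult_distrib)
  then have "6 * (Le * h\<^sup>2)\<^sup>2 * ((norm x)\<^sup>2 + (norm v)\<^sup>2 / Le + b\<^sup>2 / (3 * Le\<^sup>2)) = 6 * (Le * h\<^sup>2)\<^sup>2 *
      (\<Sum>l\<in>UNIV. tnorm2 Le (x $ l) (v $ l) + 1 / 3 * Le powi (-2) * eps\<^sup>2 * (norm (gradW1 0 0))\<^sup>2)"
    by (simp add: sum.distrib sum_tnorm2_vec power_int_minus field_simps)
  with randomized_midpoint_mean_error[OF gradU_lip gradU_0 q_ode p_ode Le _ step[folded Le_def]] h
  show ?thesis
    unfolding q0 p0 Le_def by (metis less_imp_le ord_le_eq_trans)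
qed

end
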